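(* Let $k\geqslant 1$ be an integer. For $l=(l_1,\ldots,l_k)\in(\mathbb R_{>0})^k$, let $S_l$ be the nondecreasing sequence obtained by taking the union (with multiplicity) of the $k$ sequences $T_i=\{d/l_i\}_{d=1}^\infty$, $i=1,\ldots,k$, and reordering the entries in nondecreasing order; write $S_l[d]$ for the $d$-th entry of $S_l$ (indexing from $1$), and $|l|=l_1+\ldots+l_k$. Then for every $d\in\mathbb N=\{1,2,\ldots\}$, $$\sup_{l\in(\mathbb R_{>0})^k}|l|\,S_l[d]=d+k-1.$$ *)

theory Defs
  imports "HOL-Analysis.Analysis"
begin

text \<open>The entries of the k sequences T_i = (d / l_i)_{d \<ge> 1}, i < k, indexed by pairs (i, m)
  with i < k and m \<ge> 1 (indices i are 0-based here).  A sequence s (0-indexed, so s j is the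
  (j+1)-th entry) is a nondecreasing reordering of their union with multiplicity if s is
  monotone and there is a bijection from the positions onto the index pairs.\<close>

definition is_sorted_merge :: "nat \<Rightarrow> (nat \<Rightarrow> real) \<Rightarrow> (nat \<Rightarrow> real) \<Rightarrow> bool" where
  "is_sorted_merge k l s \<longleftrightarrow> mono s \<and>
     (\<exists>\<sigma>. bij_betw \<sigma> (UNIV :: nat set) ({..<k} \<times> {1..}) \<and>
          (\<forall>j. s j = real (snd (\<sigma> j)) / l (fst (\<sigma> j))))"

definition S_entry :: "nat \<Rightarrow> (nat \<Rightarrow> real) \<Rightarrow> nat \<Rightarrow> real" where
  "S_entry k l d = (THE s. is_sorted_merge k l s) (d - 1)"

end

theory Submission
  imports Defs
begin

text \<open>Let \<open>t = S\<^sub>l[d]\<close>. Fewer than \<open>d\<close> entries of the merged sequence lie strictly below \<open>t\<close>,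
  while \<open>T\<^sub>i\<close> alone has \<open>\<lceil>t l\<^sub>i\<rceil> - 1 \<ge> t l\<^sub>i - 1\<close> of them; summing over \<open>i\<close> gives
  \<open>t |l| - k \<le> d - 1\<close>. The bound is attained at \<open>l = (d, 1, \<dots>, 1)\<close>, where \<open>S\<^sub>l[d] = 1\<close>.\<close>

definition sorted_enumeration :: "'a set \<Rightarrow> ('a \<Rightarrow> 'b::order) \<Rightarrow> (nat \<Rightarrow> 'b) \<Rightarrow> bool" where
  "sorted_enumeration A f s \<longleftrightarrow> mono s \<and> (\<exists>\<sigma>. bij_betw \<sigma> UNIV A \<and> (\<forall>j. s j = f (\<sigma> j)))"

lemma down_closed_finite_nat_eq_lessThan:
  fixes D :: "nat set"
  assumes "finite D" and down: "\<And>i i'. i \<in> D \<Longrightarrow> i' \<le> i \<Longrightarrow> i' \<in> D"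
  shows "D = {..<card D}"
proof (cases "D = {}")
  case False
  have "D = {..Max D}"
    using Max_in[OF assms(1) False] Max_ge[OF assms(1)] by (auto intro: down)
  then show ?thesis by (metis card_atMost lessThan_Suc_atMost)
qed simp

lemma sorted_enumeration_count:
  assumes "sorted_enumeration A f s"
    and fin: "finite {a \<in> A. P (f a)}"
    and down: "\<And>y z. P y \<Longrightarrow> z \<le> y \<Longrightarrow> P z"
  shows "P (s j) \<longleftrightarrow> j < card {a \<in> A. P (f a)}"
proof -
  obtain \<sigma> where mono: "mono s" and \<sigma>: "bij_betw \<sigma> UNIV A" and s: "\<And>j. s j = f (\<sigma> j)"
    using assms(1) unfolding sorted_enumeration_def by blast
  define D where "D = {j. P (s j)}"
  have "\<sigma> ` D = {a \<in> A. P (f a)}"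
    using bij_betwE[OF \<sigma>] bij_betw_imp_surj_on[OF \<sigma>] by (auto simp: D_def s)
  then have "bij_betw \<sigma> D {a \<in> A. P (f a)}"
    by (rule bij_betw_subset[OF \<sigma> subset_UNIV])
  then have card: "card D = card {a \<in> A. P (f a)}" and "finite D"
    using fin bij_betw_same_card bij_betw_finite by blast+
  moreover have "\<And>i i'. i \<in> D \<Longrightarrow> i' \<le> i \<Longrightarrow> i' \<in> D"
    using down mono by (auto simp: D_def dest: monoD)
  ultimately have "D = {..<card {a \<in> A. P (f a)}}"
    using down_closed_finite_nat_eq_lessThan by metis
  then show ?thesis by (auto simp: D_def)
qed

lemma sorted_enumeration_le_iff:
  assumes "sorted_enumeration A f s" and "finite {a \<in> A. f a \<le> x}"
  shows "s j \<le> x \<longleftrightarrow> j < card {a \<in> A. f a \<le> x}"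
  using sorted_enumeration_count[where P = "\<lambda>y. y \<le> x"] assms order_trans by blast

lemma sorted_enumeration_less_iff:
  assumes "sorted_enumeration A f s" and "finite {a \<in> A. f a < x}"
  shows "s j < x \<longleftrightarrow> j < card {a \<in> A. f a < x}"
  using sorted_enumeration_count[where P = "\<lambda>y. y < x"] assms le_less_trans by blast

lemma sorted_enumeration_unique:
  fixes f :: "'a \<Rightarrow> 'b::linorder"
  assumes "sorted_enumeration A f s" "sorted_enumeration A f s'"
    and fin: "\<And>x. finite {a \<in> A. f a \<le> x}"
  shows "s = s'"
proof
  fix j
  note le_iff = sorted_enumeration_le_iff[OF assms(1) fin] sorted_enumeration_le_iff[OF assms(2) fin]
  have "s j \<le> s' j" using le_iff[of j "s' j"] by simp
  moreover have "s' j \<le> s j" using le_iff[of j "s j"] by simp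
  ultimately show "s j = s' j" by (rule order.antisym)
qed

definition order_rank :: "('a \<Rightarrow> 'a \<Rightarrow> bool) \<Rightarrow> 'a set \<Rightarrow> 'a \<Rightarrow> nat" where
  "order_rank lt A a = card {b \<in> A. lt b a}"

lemma order_rank_less:
  assumes trans: "\<And>a b c. lt a b \<Longrightarrow> lt b c \<Longrightarrow> lt a c"
    and irrefl: "\<And>a. \<not> lt a a"
    and fin: "finite {c \<in> A. lt c a}"
    and "b \<in> A" "lt b a"
  shows "order_rank lt A b < order_rank lt A a"
proof -
  have "{c \<in> A. lt c b} \<subseteq> {c \<in> A. lt c a}" using trans \<open>lt b a\<close> by blast
  moreover have "b \<in> {c \<in> A. lt c a}" "b \<notin> {c \<in> A. lt c b}"
    using \<open>b \<in> A\<close> \<open>lt b a\<close> irrefl by auto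
  ultimately have "{c \<in> A. lt c b} \<subset> {c \<in> A. lt c a}" by blast
  then show ?thesis unfolding order_rank_def using fin by (rule psubset_card_mono[rotated])
qed

lemma bij_betw_order_rank:
  assumes trans: "\<And>a b c. lt a b \<Longrightarrow> lt b c \<Longrightarrow> lt a c"
    and irrefl: "\<And>a. \<not> lt a a"
    and total: "\<And>a b. a \<in> A \<Longrightarrow> b \<in> A \<Longrightarrow> a \<noteq> b \<Longrightarrow> lt a b \<or> lt b a"
    and fin: "\<And>a. finite {b \<in> A. lt b a}"
    and "infinite A"
  shows "bij_betw (order_rank lt A) A UNIV"
proof -
  have less: "order_rank lt A b < order_rank lt A a" if "b \<in> A" "lt b a" for a b
    by (rule order_rank_less[OF trans irrefl fin that])
  have inj: "inj_on (order_rank lt A) A"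
  proof (rule inj_onI, rule ccontr)
    fix a b assume "a \<in> A" "b \<in> A" "order_rank lt A a = order_rank lt A b" "a \<noteq> b"
    then show False
      using total[of a b] less[of b a] less[of a b] by (metis less_irrefl)
  qed
  have down: "n \<in> order_rank lt A ` A" if "a \<in> A" "n < order_rank lt A a" for a n
  proof -
    let ?P = "{b \<in> A. lt b a}"
    have "card (order_rank lt A ` ?P) = card {..<order_rank lt A a}"
      using card_image[OF inj_on_subset[OF inj]] by (simp add: order_rank_def)
    moreover have "order_rank lt A ` ?P \<subseteq> {..<order_rank lt A a}" using less by auto
    ultimately have "order_rank lt A ` ?P = {..<order_rank lt A a}" by (simp add: card_subset_eq)
    then show ?thesis using that by blast
  qed
  have "infinite (order_rank lt A ` A)" using \<open>infinite A\<close> finite_imageD[OF _ inj] by blast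
  have "n \<in> order_rank lt A ` A" for n
  proof -
    obtain a where "a \<in> A" "n < order_rank lt A a"
      using \<open>infinite (order_rank lt A ` A)\<close> unfolding infinite_nat_iff_unbounded by blast
    then show ?thesis by (rule down)
  qed
  with inj show ?thesis by (auto simp: bij_betw_def)
qed

lemma sorted_enumeration_exists:
  fixes f :: "'a::countable \<Rightarrow> 'b::linorder"
  assumes "infinite A" and fin: "\<And>x. finite {a \<in> A. f a \<le> x}"
  shows "\<exists>s. sorted_enumeration A f s"
proof -
  \<comment> \<open>ties in \<open>f\<close> are broken by the injection \<open>to_nat\<close>\<close>
  define lt where "lt a b \<longleftrightarrow> f a < f b \<or> (f a = f b \<and> to_nat a < to_nat b)" for a b
  have lt_props: "\<And>a b c. lt a b \<Longrightarrow> lt b c \<Longrightarrow> lt a c" "\<And>a. \<not> lt a a"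
    "\<And>a b. a \<in> A \<Longrightarrow> b \<in> A \<Longrightarrow> a \<noteq> b \<Longrightarrow> lt a b \<or> lt b a"
    unfolding lt_def by (auto simp: linorder_neq_iff) (metis linorder_neqE_nat to_nat_split)
  have fin_seg: "finite {b \<in> A. lt b a}" for a
    by (rule finite_subset[OF _ fin[of "f a"]]) (auto simp: lt_def)
  let ?r = "order_rank lt A"
  have r: "bij_betw ?r A UNIV" by (rule bij_betw_order_rank[OF lt_props fin_seg \<open>infinite A\<close>])
  have r_less: "?r b < ?r a" if "b \<in> A" "lt b a" for a b
    using lt_props(1,2) fin_seg that by (rule order_rank_less)
  define \<sigma> where "\<sigma> = inv_into A ?r"
  have \<sigma>: "bij_betw \<sigma> UNIV A" unfolding \<sigma>_def by (rule bij_betw_inv_into[OF r])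
  have r_\<sigma>: "?r (\<sigma> j) = j" for j
    unfolding \<sigma>_def using r by (simp add: bij_betw_def f_inv_into_f)
  have "mono (\<lambda>j. f (\<sigma> j))"
  proof (rule monoI, rule ccontr)
    fix i j :: nat assume "i \<le> j" "\<not> f (\<sigma> i) \<le> f (\<sigma> j)"
    then have "lt (\<sigma> j) (\<sigma> i)" by (simp add: lt_def not_le)
    then have "?r (\<sigma> j) < ?r (\<sigma> i)"
      using r_less bij_betwE[OF \<sigma>] by blast
    with \<open>i \<le> j\<close> show False by (simp add: r_\<sigma>)
  qed
  with \<sigma> show ?thesis unfolding sorted_enumeration_def by blast
qed

abbreviation merge_index :: "nat \<Rightarrow> (nat \<times> nat) set" where
  "merge_index k \<equiv> {..<k} \<times> {1..}"

abbreviation merge_value :: "(nat \<Rightarrow> real) \<Rightarrow> nat \<times> nat \<Rightarrow> real" where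
  "merge_value l p \<equiv> real (snd p) / l (fst p)"

lemma is_sorted_merge_eq: "is_sorted_merge k l = sorted_enumeration (merge_index k) (merge_value l)"
  by (simp add: fun_eq_iff is_sorted_merge_def sorted_enumeration_def)

lemma finite_merge_sublevel:
  assumes pos: "\<forall>i<k. l i > 0"
  shows "finite {p \<in> merge_index k. merge_value l p \<le> x}"
proof (rule finite_subset)
  show "{p \<in> merge_index k. merge_value l p \<le> x} \<subseteq> {..<k} \<times> {..nat \<lceil>\<bar>x\<bar> * (\<Sum>i<k. l i)\<rceil>}"
  proof
    fix p assume "p \<in> {p \<in> merge_index k. merge_value l p \<le> x}"
    then obtain i m where p: "p = (i, m)" and im: "i < k" "1 \<le> m" "real m / l i \<le> x"
      by (cases p) auto
    have "l i > 0" using im pos by simp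
    have "real m \<le> x * l i" using im \<open>l i > 0\<close> by (simp add: pos_divide_le_eq)
    also have "\<dots> \<le> \<bar>x\<bar> * l i" using \<open>l i > 0\<close> by (simp add: mult_right_mono)
    also have "\<dots> \<le> \<bar>x\<bar> * (\<Sum>i<k. l i)"
      using im pos by (intro mult_left_mono member_le_sum) (auto intro: less_imp_le)
    finally have "real m \<le> \<bar>x\<bar> * (\<Sum>i<k. l i)" .
    then show "p \<in> {..<k} \<times> {..nat \<lceil>\<bar>x\<bar> * (\<Sum>i<k. l i)\<rceil>}"
      using p im(1) by simp linarith
  qed
qed simp

lemma infinite_merge_index: "k \<ge> 1 \<Longrightarrow> infinite (merge_index k)"
  by (auto simp: finite_cartesian_product_iff infinite_Ici lessThan_empty_iff)

lemma sorted_enumeration_S_entry: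
  assumes "k \<ge> 1" and pos: "\<forall>i<k. l i > 0"
  shows "sorted_enumeration (merge_index k) (merge_value l) (\<lambda>j. S_entry k l (Suc j))"
proof -
  obtain s where s: "sorted_enumeration (merge_index k) (merge_value l) s"
    using sorted_enumeration_exists[OF infinite_merge_index finite_merge_sublevel] assms by blast
  have "sorted_enumeration (merge_index k) (merge_value l)
          (THE s. sorted_enumeration (merge_index k) (merge_value l) s)"
    by (rule theI[where P = "sorted_enumeration (merge_index k) (merge_value l)",
        OF s sorted_enumeration_unique[OF _ s finite_merge_sublevel[OF pos]]])
  then show ?thesis by (simp add: S_entry_def is_sorted_merge_eq)
qed

lemma S_entry_le_iff:
  assumes "k \<ge> 1" "d \<ge> 1" and pos: "\<forall>i<k. l i > 0"
  shows "S_entry k l d \<le> x \<longleftrightarrow> d \<le> card {p \<in> merge_index k. merge_value l p \<le> x}"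
  using sorted_enumeration_le_iff[OF sorted_enumeration_S_entry[OF assms(1) pos]
      finite_merge_sublevel[OF pos], of "d - 1"] \<open>d \<ge> 1\<close>
  by (simp add: less_eq_Suc_le)

lemma S_entry_less_iff:
  assumes "k \<ge> 1" "d \<ge> 1" and pos: "\<forall>i<k. l i > 0"
  shows "S_entry k l d < x \<longleftrightarrow> d \<le> card {p \<in> merge_index k. merge_value l p < x}"
proof -
  have "finite {p \<in> merge_index k. merge_value l p < x}"
    by (rule finite_subset[OF _ finite_merge_sublevel[OF pos, of x]]) auto
  then show ?thesis
    using sorted_enumeration_less_iff[OF sorted_enumeration_S_entry[OF assms(1) pos], of x "d - 1"]
      \<open>d \<ge> 1\<close>
    by (simp add: less_eq_Suc_le)
qed

lemma card_merge_below:
  assumes pos: "\<forall>i<k. l i > 0"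
  shows "card {p \<in> merge_index k. merge_value l p < t} = (\<Sum>i<k. nat \<lceil>t * l i\<rceil> - 1)"
proof -
  have "{p \<in> merge_index k. merge_value l p < t} = Sigma {..<k} (\<lambda>i. {1..<nat \<lceil>t * l i\<rceil>})"
    using pos by (auto simp: pos_divide_less_eq zless_nat_eq_int_zless less_ceiling_iff)
  then show ?thesis by simp
qed

lemma S_entry_pos:
  assumes "k \<ge> 1" "d \<ge> 1" and pos: "\<forall>i<k. l i > 0"
  shows "S_entry k l d > 0"
proof -
  have none: "{p \<in> merge_index k. merge_value l p \<le> 0} = {}"
    using pos by (auto simp: divide_le_0_iff)
  show ?thesis
    using S_entry_le_iff[OF assms, of 0, unfolded none] \<open>d \<ge> 1\<close> by simp
qed

lemma nat_ceiling_minus_one_ge: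
  assumes "x > 0"
  shows "x - 1 \<le> real (nat \<lceil>x\<rceil> - 1)"
  using assms by simp linarith

lemma S_entry_upper_bound:
  assumes "k \<ge> 1" "d \<ge> 1" and pos: "\<forall>i<k. l i > 0"
  shows "(\<Sum>i<k. l i) * S_entry k l d \<le> real d + real k - 1"
proof -
  define t where "t = S_entry k l d"
  have "t > 0" unfolding t_def by (rule S_entry_pos[OF assms])
  have "(\<Sum>i<k. nat \<lceil>t * l i\<rceil> - 1) < d"
    using S_entry_less_iff[OF assms, of t] card_merge_below[OF pos, of t] by (simp add: t_def)
  then have "real (\<Sum>i<k. nat \<lceil>t * l i\<rceil> - 1) \<le> real d - 1" by linarith
  moreover have "(\<Sum>i<k. t * l i - 1) \<le> real (\<Sum>i<k. nat \<lceil>t * l i\<rceil> - 1)"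
    unfolding of_nat_sum using \<open>t > 0\<close> pos
    by (intro sum_mono nat_ceiling_minus_one_ge) simp
  moreover have "(\<Sum>i<k. t * l i - 1) = (\<Sum>i<k. l i) * t - real k"
    by (simp add: sum_subtractf sum_distrib_left mult.commute)
  ultimately show ?thesis by (simp add: t_def)
qed

lemma S_entry_extremal:
  assumes "k \<ge> 1" "d \<ge> 1"
  defines "l \<equiv> \<lambda>i::nat. if i = 0 then real d else 1"
  shows "S_entry k l d = 1"
proof -
  have pos: "\<forall>i<k. l i > 0" using \<open>d \<ge> 1\<close> by (simp add: l_def)
  have "{p \<in> merge_index k. merge_value l p < 1} = {0} \<times> {1..<d}"
    using assms by (auto simp: l_def split: if_splits)
  then have "\<not> S_entry k l d < 1"
    using S_entry_less_iff[OF assms(1,2) pos] \<open>d \<ge> 1\<close> by simp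
  moreover have "{0::nat} \<times> {1..d} \<subseteq> {p \<in> merge_index k. merge_value l p \<le> 1}"
  proof
    fix p :: "nat \<times> nat" assume "p \<in> {0} \<times> {1..d}"
    then obtain m where "p = (0, m)" "1 \<le> m" "m \<le> d" by auto
    then show "p \<in> {p \<in> merge_index k. merge_value l p \<le> 1}"
      using \<open>k \<ge> 1\<close> by (simp add: l_def)
  qed
  then have "card ({0::nat} \<times> {1..d}) \<le> card {p \<in> merge_index k. merge_value l p \<le> 1}"
    by (rule card_mono[OF finite_merge_sublevel[OF pos]])
  then have "d \<le> card {p \<in> merge_index k. merge_value l p \<le> 1}" by simp
  then have "S_entry k l d \<le> 1"
    using S_entry_le_iff[OF assms(1,2) pos] by simp
  ultimately show ?thesis by simp
qed

theorem proposition5: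
  fixes k d :: nat
  assumes "k \<ge> 1" and "d \<ge> 1"
  shows "(SUP l\<in>{l :: nat \<Rightarrow> real. \<forall>i<k. l i > 0}.
            ereal ((\<Sum>i<k. l i) * S_entry k l d)) = ereal (real d + real k - 1)"
proof (rule antisym)
  show "(SUP l\<in>{l :: nat \<Rightarrow> real. \<forall>i<k. l i > 0}.
            ereal ((\<Sum>i<k. l i) * S_entry k l d)) \<le> ereal (real d + real k - 1)"
    using S_entry_upper_bound[OF assms] by (intro SUP_least) simp
  define l where "l = (\<lambda>i::nat. if i = 0 then real d else 1)"
  have "l \<in> {l. \<forall>i<k. l i > 0}" using \<open>d \<ge> 1\<close> by (simp add: l_def)
  then have "ereal ((\<Sum>i<k. l i) * S_entry k l d) \<le> (SUP l\<in>{l :: nat \<Rightarrow> real. \<forall>i<k. l i > 0}.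
            ereal ((\<Sum>i<k. l i) * S_entry k l d))"
    by (rule SUP_upper)
  moreover have "(\<Sum>i<k. l i) = real d + real k - 1"
    using \<open>k \<ge> 1\<close> by (cases k) (simp_all add: l_def sum.lessThan_Suc_shift del: sum.lessThan_Suc)
  ultimately show "ereal (real d + real k - 1) \<le> (SUP l\<in>{l :: nat \<Rightarrow> real. \<forall>i<k. l i > 0}.
            ereal ((\<Sum>i<k. l i) * S_entry k l d))"
    using S_entry_extremal[OF assms, folded l_def] by simp
qed

end
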